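(* Let $\mathrm{Imp}$ be the category of implication algebras and their homomorphisms. If an implication algebra $(X,\triangleright,1)$ carries an internal implication algebra structure in $\mathrm{Imp}$ (i.e. a homomorphism $*:X\times X\to X$, with the constant given by a homomorphism from the terminal algebra, satisfying the implication algebra identities), then $X$ is the one-element (terminal) implication algebra.
   Context: An implication algebra is a set $X$ with a binary operation $\triangleright$ and a constant $1$ satisfying: $x\triangleright x=1$; $(x\triangleright y)\triangleright x=x$; $(x\triangleright y)\triangleright y=(y\triangleright x)\triangleright x$; $x\triangleright(y\triangleright z)=y\triangleright(x\triangleright z)$. Homomorphisms preserve $\triangleright$ and $1$. *)

theory Defs
  imports Main
begin

definition impl_alg :: "'a set \<Rightarrow> ('a \<Rightarrow> 'a \<Rightarrow> 'a) \<Rightarrow> 'a \<Rightarrow> bool" where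
  "impl_alg X imp one \<longleftrightarrow>
     one \<in> X \<and> (\<forall>x\<in>X. \<forall>y\<in>X. imp x y \<in> X) \<and>
     (\<forall>x\<in>X. imp x x = one) \<and>
     (\<forall>x\<in>X. \<forall>y\<in>X. imp (imp x y) x = x) \<and>
     (\<forall>x\<in>X. \<forall>y\<in>X. imp (imp x y) y = imp (imp y x) x) \<and>
     (\<forall>x\<in>X. \<forall>y\<in>X. \<forall>z\<in>X. imp x (imp y z) = imp y (imp x z))"

definition impl_hom :: "'a set \<Rightarrow> ('a \<Rightarrow> 'a \<Rightarrow> 'a) \<Rightarrow> 'a \<Rightarrow>
    'b set \<Rightarrow> ('b \<Rightarrow> 'b \<Rightarrow> 'b) \<Rightarrow> 'b \<Rightarrow> ('a \<Rightarrow> 'b) \<Rightarrow> bool" where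
  "impl_hom X imp one Y imp' one' f \<longleftrightarrow>
     f ` X \<subseteq> Y \<and> (\<forall>x\<in>X. \<forall>y\<in>X. f (imp x y) = imp' (f x) (f y)) \<and> f one = one'"

definition prod_imp :: "('a \<Rightarrow> 'a \<Rightarrow> 'a) \<Rightarrow> ('a \<times> 'a) \<Rightarrow> ('a \<times> 'a) \<Rightarrow> ('a \<times> 'a)" where
  "prod_imp imp p q = (imp (fst p) (fst q), imp (snd p) (snd q))"

definition term_imp :: "unit \<Rightarrow> unit \<Rightarrow> unit" where
  "term_imp u v = ()"

end

theory Submission
  imports Defs
begin

text \<open>An Eckmann--Hilton argument: an internal implication operation \<open>\<star>\<close> is a homomorphism,
  so it interchanges with \<open>\<triangleright>\<close>. Writing \<open>x = (x \<triangleright> x) \<star> (1 \<triangleright> x)\<close> and interchanging gives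
  \<open>(x \<star> 1) \<triangleright> (x \<star> x) = 1 \<triangleright> 1 = 1\<close>, since in every implication algebra \<open>1\<close> is a left unit
  and a right absorbing element.\<close>

lemma impl_alg_one_imp:
  assumes "impl_alg X imp one" and "x \<in> X"
  shows "imp one x = x"
proof -
  have "imp (imp x x) x = x" using assms unfolding impl_alg_def by blast
  then show ?thesis using assms unfolding impl_alg_def by simp
qed

lemma impl_alg_imp_one:
  assumes "impl_alg X imp one" and "x \<in> X"
  shows "imp x one = one"
  using assms unfolding impl_alg_def by metis

lemma impl_alg_trivial_if_interchange:
  assumes alg: "impl_alg X imp one" and alg': "impl_alg X imp' one"
    and interchange: "\<And>a b d e. \<lbrakk>a \<in> X; b \<in> X; d \<in> X; e \<in> X\<rbrakk> \<Longrightarrow>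
      imp' (imp a b) (imp d e) = imp (imp' a d) (imp' b e)"
  shows "X = {one}"
proof -
  have one: "one \<in> X" using alg by (simp add: impl_alg_def)
  have "x = one" if x: "x \<in> X" for x
  proof -
    have self: "imp x x = one" "imp' x x = one" using alg alg' x by (simp_all add: impl_alg_def)
    have "x = imp' (imp x x) (imp one x)"
      using self impl_alg_one_imp[OF alg' x] impl_alg_one_imp[OF alg x] by simp
    also have "\<dots> = imp (imp' x one) (imp' x x)" using interchange x one by blast
    also have "\<dots> = one" using self impl_alg_imp_one[OF alg' x] impl_alg_one_imp[OF alg one] by simp
    finally show ?thesis .
  qed
  with one show ?thesis by blast
qed

theorem mainTheorem15:
  fixes X :: "'a set" and imp :: "'a \<Rightarrow> 'a \<Rightarrow> 'a" and one :: 'a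
    and star :: "'a \<times> 'a \<Rightarrow> 'a" and c :: "unit \<Rightarrow> 'a"
  assumes "impl_alg X imp one"
    and "impl_hom (X \<times> X) (prod_imp imp) (one, one) X imp one star"
    and "impl_hom {()} term_imp () X imp one c"
    and "impl_alg X (\<lambda>x y. star (x, y)) (c ())"
  shows "X = {one}"
proof (rule impl_alg_trivial_if_interchange[OF assms(1)])
  show "impl_alg X (\<lambda>x y. star (x, y)) one"
    using assms(3,4) by (simp add: impl_hom_def)
  show "star (imp a b, imp d e) = imp (star (a, d)) (star (b, e))"
    if "a \<in> X" "b \<in> X" "d \<in> X" "e \<in> X" for a b d e
    using assms(2) that by (simp add: impl_hom_def prod_imp_def)
qed

end
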